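(* Let $X_1,\dots,X_n$ be i.i.d. real random variables whose common distribution is symmetric about an unknown $\mu\in\mathbb{R}$. Fix integers $k\le n$ and $1\le r\le m$, let $R(\theta)$ be the one-sided resampled median-of-means rank defined in the context (with the same random signs and permutation used for all $\theta$), and let $\Theta_n=\{\theta\in\mathbb{R}: R(\theta)\le m-r\}$. Then $$\mathbb{P}(\mu\in\Theta_n)=1-\frac{r}{m}.$$
   Context: Blocks: for $\ell=1,\dots,k$ let $B_\ell=\{i\in[n]: i\equiv \ell \pmod k\}$. Median: for reals $y_1,\dots,y_k$ with order statistics $y_{(1)}\le\dots\le y_{(k)}$, $\mathrm{med}(y_1,\dots,y_k)=y_{(k/2)}$ if $k$ is even and $y_{(\lfloor k/2\rfloor+1)}$ if $k$ is odd. Median-of-means: $\widehat\mu(x_1,\dots,x_n)=\mathrm{med}\big(\frac{1}{|B_1|}\sum_{i\in B_1}x_i,\dots,\frac{1}{|B_k|}\sum_{i\in B_k}x_i\big)$. Randomization: $\{\alpha_{i,j}\}_{i\in[n],j\in[m-1]}$ i.i.d. Rademacher signs independent of the data; $\pi$ a uniformly random permutation of $\{0,\dots,m-1\}$ independent of data and signs. For $\theta\in\mathbb{R}$: $\mathcal{D}_0(\theta)=(X_1,\dots,X_n)$, $\mathcal{D}_j(\theta)=(\alpha_{1,j}(X_1-\theta)+\theta,\dots,\alpha_{n,j}(X_n-\theta)+\theta)$ for $j\in[m-1]$; $S_j(\theta)=\widehat\mu(\mathcal{D}_j(\theta))-\theta$ for $j=0,\dots,m-1$. $S_j(\theta)\prec_\pi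 S_l(\theta)$ iff $S_j(\theta)<S_l(\theta)$, or $S_j(\theta)=S_l(\theta)$ and $\pi(j)<\pi(l)$. $R(\theta)=1+\sum_{j=1}^{m-1}\mathbb{I}\big(S_0(\theta)\prec_\pi S_j(\theta)\big)$. *)

theory Defs
  imports "HOL-Probability.Probability" "HOL-Combinatorics.Permutations"
begin

definition block :: "nat \<Rightarrow> nat \<Rightarrow> nat \<Rightarrow> nat set" where
  "block n k l = {i \<in> {1..n}. i mod k = l mod k}"

text \<open>Median of y_1..y_k: order statistic y_(k/2) if k even, y_(floor(k/2)+1) if k odd
  (1-indexed order statistics; the list below is 0-indexed).\<close>
definition med :: "nat \<Rightarrow> (nat \<Rightarrow> real) \<Rightarrow> real" where
  "med k y = (let ys = sort (map y [1..<k+1]) in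
      if even k then ys ! (k div 2 - 1) else ys ! (k div 2))"

definition mom :: "nat \<Rightarrow> nat \<Rightarrow> (nat \<Rightarrow> real) \<Rightarrow> real" where
  "mom n k x = med k (\<lambda>l. (\<Sum>i\<in>block n k l. x i) / real (card (block n k l)))"

definition Dset :: "(nat \<Rightarrow> real) \<Rightarrow> (nat \<Rightarrow> nat \<Rightarrow> real) \<Rightarrow> real \<Rightarrow> nat \<Rightarrow> nat \<Rightarrow> real" where
  "Dset x a \<theta> j = (if j = 0 then x else (\<lambda>i. a i j * (x i - \<theta>) + \<theta>))"

definition Sstat :: "nat \<Rightarrow> nat \<Rightarrow> (nat \<Rightarrow> real) \<Rightarrow> (nat \<Rightarrow> nat \<Rightarrow> real) \<Rightarrow> real \<Rightarrow> nat \<Rightarrow> real" where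
  "Sstat n k x a \<theta> j = mom n k (Dset x a \<theta> j) - \<theta>"

definition prec_pi :: "(nat \<Rightarrow> nat) \<Rightarrow> (nat \<Rightarrow> real) \<Rightarrow> nat \<Rightarrow> nat \<Rightarrow> bool" where
  "prec_pi p S j l = (S j < S l \<or> (S j = S l \<and> p j < p l))"

definition rank_R :: "nat \<Rightarrow> nat \<Rightarrow> nat \<Rightarrow> (nat \<Rightarrow> real) \<Rightarrow> (nat \<Rightarrow> nat \<Rightarrow> real)
    \<Rightarrow> (nat \<Rightarrow> nat) \<Rightarrow> real \<Rightarrow> nat" where
  "rank_R n k m x a p \<theta> = 1 + card {j \<in> {1..<m}. prec_pi p (Sstat n k x a \<theta>) 0 j}"

definition conf_set :: "nat \<Rightarrow> nat \<Rightarrow> nat \<Rightarrow> nat \<Rightarrow> (nat \<Rightarrow> real) \<Rightarrow> (nat \<Rightarrow> nat \<Rightarrow> real)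
    \<Rightarrow> (nat \<Rightarrow> nat) \<Rightarrow> real set" where
  "conf_set n k m r x a p = {\<theta>. rank_R n k m x a p \<theta> \<le> m - r}"

end

theory Submission
  imports Defs
begin

text \<open>
  Encode the resampling by an \<open>n \<times> m\<close> sign matrix whose column \<open>j\<close> produces the data set
  \<open>\<D>\<^sub>j(\<mu>)\<close>, column 0 being constantly 1. As the data are i.i.d. and symmetric about \<open>\<mu>\<close>,
  their law is invariant under the flips \<open>X\<^sub>i - \<mu> \<mapsto> s\<^sub>i (X\<^sub>i - \<mu>)\<close>; and flipping the data
  by \<open>s\<close> before resampling with the signs \<open>a\<close> amounts to resampling the original data with
  the matrix whose columns are \<open>s\<close> and \<open>s \<cdot> a\<^sub>j\<close>. After averaging over \<open>s\<close>, all columns are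
  therefore exchangeable: swapping columns 0 and \<open>j\<close>, and composing the tie-breaking
  permutation with the swap, maps the event "\<open>S\<^sub>0\<close> has rank at most \<open>m - r\<close>" to the same
  event for \<open>S\<^sub>j\<close>. Since tie-breaking makes the ranks of \<open>S\<^sub>0, \<dots>, S\<^sub>m\<^sub>-\<^sub>1\<close> a permutation
  of \<open>1, \<dots>, m\<close>, exactly \<open>m - r\<close> columns lie in that event, which therefore has probability
  \<open>(m - r) / m\<close>.
\<close>

section \<open>Ranks with random tie-breaking\<close>

definition rank_among :: "nat \<Rightarrow> (nat \<Rightarrow> nat) \<Rightarrow> (nat \<Rightarrow> real) \<Rightarrow> nat \<Rightarrow> nat" where
  "rank_among m p S j = 1 + card {l \<in> {..<m}. prec_pi p S j l}"

lemma prec_pi_irrefl: "\<not> prec_pi p S j j"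
  by (simp add: prec_pi_def)

lemma prec_pi_trans: "prec_pi p S a b \<Longrightarrow> prec_pi p S b c \<Longrightarrow> prec_pi p S a c"
  unfolding prec_pi_def by auto

lemma prec_pi_total:
  "inj_on p A \<Longrightarrow> a \<in> A \<Longrightarrow> b \<in> A \<Longrightarrow> a \<noteq> b \<Longrightarrow> prec_pi p S a b \<or> prec_pi p S b a"
  unfolding prec_pi_def inj_on_def by (metis linorder_neqE_linordered_idom linorder_neqE_nat)

lemma rank_among_cong:
  assumes "\<And>l. l < m \<Longrightarrow> S l = S' l" and "j < m"
  shows "rank_among m p S j = rank_among m p S' j"
  unfolding rank_among_def prec_pi_def using assms
  by (intro arg_cong[where f="\<lambda>A. 1 + card A"] Collect_cong) auto

lemma rank_among_less:
  assumes "prec_pi p S j l" "j < m" "l < m"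
  shows "rank_among m p S l < rank_among m p S j"
proof -
  have "{l' \<in> {..<m}. prec_pi p S l l'} \<subset> {l' \<in> {..<m}. prec_pi p S j l'}"
    using assms prec_pi_trans prec_pi_irrefl by blast
  then show ?thesis
    unfolding rank_among_def by (simp add: psubset_card_mono)
qed

lemma bij_betw_rank_among:
  assumes "p permutes {..<m}"
  shows "bij_betw (rank_among m p S) {..<m} {1..m}"
proof -
  have inj: "inj_on (rank_among m p S) {..<m}"
  proof (rule inj_onI)
    fix j l assume j: "j \<in> {..<m}" and l: "l \<in> {..<m}"
      and eq: "rank_among m p S j = rank_among m p S l"
    show "j = l"
    proof (rule ccontr)
      assume "j \<noteq> l"
      then have "prec_pi p S j l \<or> prec_pi p S l j"
        using prec_pi_total[OF permutes_inj_on[OF assms] j l] by simp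
      then show False
        using rank_among_less[of p S j l m] rank_among_less[of p S l j m] j l eq by auto
    qed
  qed
  have "rank_among m p S j \<in> {1..m}" if "j < m" for j
  proof -
    have "card {l \<in> {..<m}. prec_pi p S j l} \<le> card ({..<m} - {j})"
      using prec_pi_irrefl by (intro card_mono) auto
    then show ?thesis
      using that unfolding rank_among_def by auto
  qed
  then have "rank_among m p S ` {..<m} \<subseteq> {1..m}"
    by auto
  moreover have "card (rank_among m p S ` {..<m}) = card {1..m}"
    using card_image[OF inj] by simp
  ultimately show ?thesis
    using inj by (simp add: bij_betw_def card_subset_eq)
qed

lemma card_rank_among_le:
  assumes "p permutes {..<m}" "t \<le> m"
  shows "card {j \<in> {..<m}. rank_among m p S j \<le> t} = t"
proof -
  have "bij_betw (rank_among m p S) {j \<in> {..<m}. rank_among m p S j \<le> t} {y \<in> {1..m}. y \<le> t}"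
    using bij_betw_rank_among[OF assms(1)] by (rule bij_betw_Collect) simp
  moreover have "{y \<in> {1..m}. y \<le> t} = {1..t}"
    using assms(2) by auto
  ultimately show ?thesis
    by (simp add: bij_betw_same_card)
qed

lemma rank_among_permute:
  assumes \<tau>: "\<tau> permutes {..<m}" and S': "\<And>l. l < m \<Longrightarrow> S' l = S (\<tau> l)" and j: "j < m"
  shows "rank_among m (p \<circ> \<tau>) S' j = rank_among m p S (\<tau> j)"
proof -
  let ?Q = "prec_pi p S (\<tau> j)"
  have "prec_pi (p \<circ> \<tau>) S' j l = ?Q (\<tau> l)" if "l < m" for l
    using S'[OF that] S'[OF j] unfolding prec_pi_def by simp
  then have "{l \<in> {..<m}. prec_pi (p \<circ> \<tau>) S' j l} = {l \<in> {..<m}. ?Q (\<tau> l)}"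
    by blast
  moreover have "bij_betw \<tau> {l \<in> {..<m}. ?Q (\<tau> l)} {l \<in> {..<m}. ?Q l}"
    using permutes_imp_bij[OF \<tau>] by (rule bij_betw_Collect) simp
  ultimately show ?thesis
    unfolding rank_among_def by (simp add: bij_betw_same_card)
qed

lemma mom_cong: "(\<And>i. i \<in> {1..n} \<Longrightarrow> x i = x' i) \<Longrightarrow> mom n k x = mom n k x'"
  unfolding mom_def block_def
  by (intro arg_cong[where f="med k"] ext arg_cong2[where f="(/)"] sum.cong) auto

lemma rank_R_cong:
  assumes "\<And>i. i \<in> {1..n} \<Longrightarrow> x i = x' i"
    and "\<And>i j. i \<in> {1..n} \<Longrightarrow> j \<in> {1..<m} \<Longrightarrow> a i j = a' i j"
  shows "rank_R n k m x a p \<theta> = rank_R n k m x' a' p \<theta>"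
proof -
  have "Sstat n k x a \<theta> j = Sstat n k x' a' \<theta> j" if "j < m" for j
    unfolding Sstat_def Dset_def using assms that
    by (intro arg_cong2[where f="(-)"] mom_cong) auto
  then show ?thesis
    unfolding rank_R_def prec_pi_def by (intro arg_cong[where f="\<lambda>A. 1 + card A"] Collect_cong) auto
qed

lemma rank_R_eq_rank_among: "rank_R n k m x a p \<theta> = rank_among m p (Sstat n k x a \<theta>) 0"
proof -
  have "{j \<in> {1..<m}. prec_pi p (Sstat n k x a \<theta>) 0 j} = {l \<in> {..<m}. prec_pi p (Sstat n k x a \<theta>) 0 l}"
    using prec_pi_irrefl[of p "Sstat n k x a \<theta>" 0] by (auto simp: Suc_le_eq) (metis gr0I)
  then show ?thesis
    unfolding rank_R_def rank_among_def by simp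
qed

section \<open>Sign matrices and exchangeable columns\<close>

definition sign_vectors :: "'a set \<Rightarrow> ('a \<Rightarrow> real) set" where
  "sign_vectors I = I \<rightarrow>\<^sub>E {-1, 1}"

lemma sign_vectors_mem: "s \<in> sign_vectors I \<Longrightarrow> i \<in> I \<Longrightarrow> s i \<in> {-1, 1}"
  unfolding sign_vectors_def by (rule PiE_mem)

lemma sign_vectors_extensional: "s \<in> sign_vectors I \<Longrightarrow> s \<in> extensional I"
  by (simp add: sign_vectors_def PiE_iff)

lemma sign_vectors_mult_self: "s \<in> sign_vectors I \<Longrightarrow> i \<in> I \<Longrightarrow> s i * s i = 1"
  unfolding sign_vectors_def by (drule PiE_mem) auto

lemma sign_mult_closed: "(x::real) \<in> {-1, 1} \<Longrightarrow> y \<in> {-1, 1} \<Longrightarrow> x * y \<in> {-1, 1}"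
  by auto

lemma finite_sign_vectors: "finite I \<Longrightarrow> finite (sign_vectors I)"
  unfolding sign_vectors_def by (intro finite_PiE) auto

lemma card_sign_vectors: "finite I \<Longrightarrow> card (sign_vectors I) = 2 ^ card I"
  unfolding sign_vectors_def by (simp add: card_PiE numeral_2_eq_2)

definition col_stat :: "nat \<Rightarrow> nat \<Rightarrow> real \<Rightarrow> (nat \<Rightarrow> real) \<Rightarrow> (nat \<times> nat \<Rightarrow> real) \<Rightarrow> nat \<Rightarrow> real"
  where "col_stat n k \<mu> y c j = mom n k (\<lambda>i. \<mu> + c (i, j) * (y i - \<mu>)) - \<mu>"

definition permute_cols :: "nat \<Rightarrow> nat \<Rightarrow> (nat \<Rightarrow> nat) \<Rightarrow> (nat \<times> nat \<Rightarrow> real) \<Rightarrow> nat \<times> nat \<Rightarrow> real"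
  where "permute_cols n m \<tau> c = restrict (\<lambda>(i, j). c (i, \<tau> j)) ({1..n} \<times> {..<m})"

lemma col_stat_permute_cols:
  assumes "\<tau> permutes {..<m}" "j < m"
  shows "col_stat n k \<mu> y (permute_cols n m \<tau> c) j = col_stat n k \<mu> y c (\<tau> j)"
  unfolding col_stat_def permute_cols_def using assms
  by (intro arg_cong2[where f="(-)"] mom_cong) auto

lemma permute_cols_sign_vectors:
  assumes "\<tau> permutes {..<m}" "c \<in> sign_vectors ({1..n} \<times> {..<m})"
  shows "permute_cols n m \<tau> c \<in> sign_vectors ({1..n} \<times> {..<m})"
  using assms permutes_in_image[OF assms(1)]
  unfolding sign_vectors_def permute_cols_def by (auto simp: PiE_iff)

lemma permute_cols_involution:
  assumes "\<tau> permutes {..<m}" "\<And>j. \<tau> (\<tau> j) = j" "c \<in> extensional ({1..n} \<times> {..<m})"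
  shows "permute_cols n m \<tau> (permute_cols n m \<tau> c) = c"
proof (rule extensionalityI[OF _ assms(3)])
  show "permute_cols n m \<tau> (permute_cols n m \<tau> c) \<in> extensional ({1..n} \<times> {..<m})"
    unfolding permute_cols_def by simp
  show "permute_cols n m \<tau> (permute_cols n m \<tau> c) x = c x" if "x \<in> {1..n} \<times> {..<m}" for x
    using that permutes_in_image[OF assms(1)] assms(2) unfolding permute_cols_def by auto
qed

lemma card_col_rank_le_swap:
  fixes n k m t :: nat and \<mu> :: real and y :: "nat \<Rightarrow> real"
  defines "A \<equiv> sign_vectors ({1..n} \<times> {..<m}) \<times> {p. p permutes {..<m}}"
  assumes j: "j < m"
  shows "card {x \<in> A. rank_among m (snd x) (col_stat n k \<mu> y (fst x)) j \<le> t}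
    = card {x \<in> A. rank_among m (snd x) (col_stat n k \<mu> y (fst x)) 0 \<le> t}"
proof -
  let ?P = "\<lambda>j x. rank_among m (snd x) (col_stat n k \<mu> y (fst x)) j \<le> t"
  let ?\<tau> = "Transposition.transpose 0 j"
  let ?h = "\<lambda>x. (permute_cols n m ?\<tau> (fst x), snd x \<circ> ?\<tau>)"
  have \<tau>: "?\<tau> permutes {..<m}"
    using j by (intro permutes_swap_id) auto
  have "bij_betw ?h A A"
  proof (rule bij_betw_byWitness[where f'="?h"])
    show "\<forall>x\<in>A. ?h (?h x) = x"
      using permute_cols_involution[OF \<tau> transpose_involutory]
      by (auto simp: A_def sign_vectors_def PiE_iff comp_assoc)
    then show "\<forall>x\<in>A. ?h (?h x) = x" .
    show "?h ` A \<subseteq> A"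
      using \<tau> permute_cols_sign_vectors[OF \<tau>] by (auto simp: A_def intro: permutes_compose)
    then show "?h ` A \<subseteq> A" .
  qed
  moreover have "?P 0 (?h x) \<longleftrightarrow> ?P j x" for x
    using rank_among_permute[where S'="col_stat n k \<mu> y (permute_cols n m ?\<tau> (fst x))"
        and S="col_stat n k \<mu> y (fst x)", OF \<tau> col_stat_permute_cols[OF \<tau>]] j
    by simp
  ultimately have "bij_betw ?h {x \<in> A. ?P j x} {x \<in> A. ?P 0 x}"
    by (rule bij_betw_Collect)
  then show ?thesis
    by (simp add: bij_betw_same_card)
qed

lemma card_col_rank_zero_le:
  fixes n k m t :: nat and \<mu> :: real and y :: "nat \<Rightarrow> real"
  defines "A \<equiv> sign_vectors ({1..n} \<times> {..<m}) \<times> {p. p permutes {..<m}}"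
  assumes "t \<le> m"
  shows "m * card {x \<in> A. rank_among m (snd x) (col_stat n k \<mu> y (fst x)) 0 \<le> t} = t * card A"
proof -
  let ?P = "\<lambda>j x. rank_among m (snd x) (col_stat n k \<mu> y (fst x)) j \<le> t"
  have "card {j \<in> {..<m}. ?P j x} = t" if "x \<in> A" for x
  proof -
    have "snd x permutes {..<m}"
      using that unfolding A_def mem_Times_iff mem_Collect_eq by (rule conjunct2)
    then show ?thesis
      using assms(2) by (rule card_rank_among_le)
  qed
  then have "(\<Sum>x\<in>A. card {j \<in> {..<m}. ?P j x}) = (\<Sum>x\<in>A. t)"
    by (rule sum.cong[OF refl])
  also have "\<dots> = t * card A"
    by simp
  finally have "(\<Sum>x\<in>A. card {j \<in> {..<m}. ?P j x}) = t * card A" .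
  moreover have "finite A"
    unfolding A_def by (intro finite_cartesian_product finite_sign_vectors finite_permutations) auto
  then have "(\<Sum>x\<in>A. card {j \<in> {..<m}. ?P j x}) = card {x \<in> A. ?P 0 x} * card {..<m}"
    using card_col_rank_le_swap unfolding A_def by (intro sum_multicount) blast+
  ultimately show ?thesis
    by (simp only: card_lessThan mult.commute)
qed

section \<open>Flipping the data\<close>

definition sign_flip :: "'i set \<Rightarrow> real \<Rightarrow> ('i \<Rightarrow> real) \<Rightarrow> ('i \<Rightarrow> real) \<Rightarrow> 'i \<Rightarrow> real" where
  "sign_flip I \<mu> s y = restrict (\<lambda>i. \<mu> + s i * (y i - \<mu>)) I"

text \<open>Flipping the data by \<open>s\<close> and resampling with the signs \<open>a\<close> is resampling the unflipped
  data with the sign matrix \<open>merge_signs n m s a\<close> (lemma \<open>Sstat_sign_flip\<close>), in which column 0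
  plays the same role as the others.\<close>

definition merge_signs :: "nat \<Rightarrow> nat \<Rightarrow> (nat \<Rightarrow> real) \<Rightarrow> (nat \<times> nat \<Rightarrow> real) \<Rightarrow> nat \<times> nat \<Rightarrow> real"
  where "merge_signs n m s a =
    restrict (\<lambda>(i, j). if j = 0 then s i else s i * a (i, j)) ({1..n} \<times> {..<m})"

definition split_signs :: "nat \<Rightarrow> nat \<Rightarrow> (nat \<times> nat \<Rightarrow> real) \<Rightarrow> (nat \<Rightarrow> real) \<times> (nat \<times> nat \<Rightarrow> real)"
  where "split_signs n m c =
    (restrict (\<lambda>i. c (i, 0)) {1..n}, restrict (\<lambda>(i, j). c (i, 0) * c (i, j)) ({1..n} \<times> {1..<m}))"

lemma split_merge_signs:
  assumes s: "s \<in> sign_vectors {1..n}" and a: "a \<in> sign_vectors ({1..n} \<times> {1..<m})"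
    and m: "1 \<le> m"
  shows "split_signs n m (merge_signs n m s a) = (s, a)"
proof -
  have "restrict (\<lambda>i. merge_signs n m s a (i, 0)) {1..n} = s"
  proof (rule extensionalityI[OF _ sign_vectors_extensional[OF s]])
    fix i assume "i \<in> {1..n}"
    then show "restrict (\<lambda>i. merge_signs n m s a (i, 0)) {1..n} i = s i"
      using m by (simp add: merge_signs_def)
  qed simp
  moreover have "restrict (\<lambda>(i, j). merge_signs n m s a (i, 0) * merge_signs n m s a (i, j))
      ({1..n} \<times> {1..<m}) = a"
  proof (rule extensionalityI[OF _ sign_vectors_extensional[OF a]])
    fix x assume "x \<in> {1..n} \<times> {1..<m}"
    then obtain i j where x: "x = (i, j)" and i: "i \<in> {1..n}" and j: "j \<in> {1..<m}"
      by blast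
    have "s i * (s i * a (i, j)) = a (i, j)"
      using sign_vectors_mult_self[OF s i] by (simp add: mult.assoc[symmetric])
    then show "restrict (\<lambda>(i, j). merge_signs n m s a (i, 0) * merge_signs n m s a (i, j))
        ({1..n} \<times> {1..<m}) x = a x"
      using x i j by (simp add: merge_signs_def)
  qed simp
  ultimately show ?thesis
    unfolding split_signs_def by simp
qed

lemma merge_split_signs:
  assumes c: "c \<in> sign_vectors ({1..n} \<times> {..<m})" and m: "1 \<le> m"
  shows "merge_signs n m (fst (split_signs n m c)) (snd (split_signs n m c)) = c"
proof (rule extensionalityI[OF _ sign_vectors_extensional[OF c]])
  fix x assume "x \<in> {1..n} \<times> {..<m}"
  then obtain i j where x: "x = (i, j)" and i: "i \<in> {1..n}" and j: "j < m"
    by blast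
  have "c (i, 0) * (c (i, 0) * c (i, j)) = c (i, j)"
    using sign_vectors_mult_self[OF c, of "(i, 0)"] i m by (simp add: mult.assoc[symmetric])
  then show "merge_signs n m (fst (split_signs n m c)) (snd (split_signs n m c)) x = c x"
    using x i j by (simp add: merge_signs_def split_signs_def)
qed (simp add: merge_signs_def)

lemma merge_signs_sign_vectors:
  assumes s: "s \<in> sign_vectors {1..n}" and a: "a \<in> sign_vectors ({1..n} \<times> {1..<m})"
  shows "merge_signs n m s a \<in> sign_vectors ({1..n} \<times> {..<m})"
  unfolding merge_signs_def sign_vectors_def restrict_PiE_iff
proof
  fix x assume "x \<in> {1..n} \<times> {..<m}"
  then obtain i j where x: "x = (i, j)" and i: "i \<in> {1..n}" and j: "j < m"
    by blast
  have "s i * a (i, j) \<in> {-1, 1}" if "j \<noteq> 0"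
    using sign_mult_closed[OF sign_vectors_mem[OF s i] sign_vectors_mem[OF a]] i j that by simp
  then show "(case x of (i, j) \<Rightarrow> if j = 0 then s i else s i * a (i, j)) \<in> {-1, 1}"
    using x sign_vectors_mem[OF s i] by simp
qed

lemma split_signs_sign_vectors:
  assumes c: "c \<in> sign_vectors ({1..n} \<times> {..<m})" and m: "1 \<le> m"
  shows "split_signs n m c \<in> sign_vectors {1..n} \<times> sign_vectors ({1..n} \<times> {1..<m})"
proof -
  have c0: "c (i, 0) \<in> {-1, 1}" if "i \<in> {1..n}" for i
    using sign_vectors_mem[OF c] that m by simp
  have "(\<lambda>(i, j). c (i, 0) * c (i, j)) x \<in> {-1, 1}" if x: "x \<in> {1..n} \<times> {1..<m}" for x
  proof -
    obtain i j where "x = (i, j)" "i \<in> {1..n}" "j \<in> {1..<m}"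
      using x by blast
    then show ?thesis
      using sign_mult_closed[OF c0 sign_vectors_mem[OF c]] by simp
  qed
  then show ?thesis
    using c0 unfolding split_signs_def sign_vectors_def by (simp add: restrict_PiE_iff)
qed

lemma bij_betw_merge_signs:
  assumes "1 \<le> m"
  shows "bij_betw (\<lambda>x. merge_signs n m (fst x) (snd x))
    (sign_vectors {1..n} \<times> sign_vectors ({1..n} \<times> {1..<m})) (sign_vectors ({1..n} \<times> {..<m}))"
proof (rule bij_betw_byWitness[where f'="split_signs n m"])
  show "\<forall>x \<in> sign_vectors {1..n} \<times> sign_vectors ({1..n} \<times> {1..<m}).
      split_signs n m (merge_signs n m (fst x) (snd x)) = x"
    using split_merge_signs[OF _ _ assms] by (auto simp only: mem_Times_iff fst_conv snd_conv)
  show "\<forall>c \<in> sign_vectors ({1..n} \<times> {..<m}).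
      merge_signs n m (fst (split_signs n m c)) (snd (split_signs n m c)) = c"
    using merge_split_signs[OF _ assms] by blast
  show "(\<lambda>x. merge_signs n m (fst x) (snd x)) ` (sign_vectors {1..n} \<times> sign_vectors ({1..n} \<times> {1..<m}))
      \<subseteq> sign_vectors ({1..n} \<times> {..<m})"
    using merge_signs_sign_vectors by (auto simp only: mem_Times_iff fst_conv snd_conv)
  show "split_signs n m ` sign_vectors ({1..n} \<times> {..<m})
      \<subseteq> sign_vectors {1..n} \<times> sign_vectors ({1..n} \<times> {1..<m})"
    using split_signs_sign_vectors[OF _ assms] by blast
qed

lemma Sstat_sign_flip:
  assumes "j < m"
  shows "Sstat n k (sign_flip {1..n} \<mu> s y) (\<lambda>i j. a (i, j)) \<mu> j = col_stat n k \<mu> y (merge_signs n m s a) j"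
  unfolding Sstat_def col_stat_def Dset_def using assms
  by (intro arg_cong2[where f="(-)"] mom_cong) (auto simp: sign_flip_def merge_signs_def algebra_simps)

lemma rank_R_sign_flip:
  "rank_R n k m (sign_flip {1..n} \<mu> s y) (\<lambda>i j. a (i, j)) p \<mu>
    = rank_among m p (col_stat n k \<mu> y (merge_signs n m s a)) 0"
proof (cases "m = 0")
  case False
  then show ?thesis
    unfolding rank_R_eq_rank_among by (intro rank_among_cong Sstat_sign_flip) simp_all
qed (simp add: rank_R_def rank_among_def)

lemma card_rank_R_sign_flip_le:
  fixes n k m t :: nat and \<mu> :: real and y :: "nat \<Rightarrow> real"
  defines "A \<equiv> (sign_vectors {1..n} \<times> sign_vectors ({1..n} \<times> {1..<m})) \<times> {p. p permutes {..<m}}"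
  assumes "t \<le> m" "1 \<le> m"
  shows "m * card {x \<in> A. rank_R n k m (sign_flip {1..n} \<mu> (fst (fst x)) y) (\<lambda>i j. snd (fst x) (i, j)) (snd x) \<mu> \<le> t}
    = t * 2 ^ (n * m) * fact m"
proof -
  let ?C = "sign_vectors ({1..n} \<times> {..<m}) \<times> {p. p permutes {..<m}}"
  let ?g = "map_prod (\<lambda>x. merge_signs n m (fst x) (snd x)) id"
  have "bij_betw ?g A ?C"
    unfolding A_def by (intro bij_betw_map_prod bij_betw_merge_signs assms(3) bij_betw_id)
  then have "bij_betw ?g
      {x \<in> A. rank_R n k m (sign_flip {1..n} \<mu> (fst (fst x)) y) (\<lambda>i j. snd (fst x) (i, j)) (snd x) \<mu> \<le> t}
      {x \<in> ?C. rank_among m (snd x) (col_stat n k \<mu> y (fst x)) 0 \<le> t}"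
    by (rule bij_betw_Collect) (simp add: rank_R_sign_flip split_beta del: One_nat_def)
  moreover have "card ?C = 2 ^ (n * m) * fact m"
    by (simp add: card_cartesian_product card_sign_vectors card_permutations)
  ultimately show ?thesis
    using card_col_rank_zero_le[OF assms(2), of n k \<mu> y] by (simp add: bij_betw_same_card)
qed

section \<open>Measurability\<close>

lemma sorted_nth_le_iff_less_length_filter:
  fixes xs :: "'a::linorder list"
  assumes sorted: "sorted xs" and i: "i < length xs"
  shows "xs ! i \<le> t \<longleftrightarrow> i < length (filter (\<lambda>x. x \<le> t) xs)"
proof -
  let ?P = "\<lambda>x. x \<le> t"
  have filter_eq: "filter ?P xs = takeWhile ?P xs"
  proof (rule takeWhile_eq_filter[symmetric])
    fix x assume "x \<in> set (dropWhile ?P xs)"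
    then show "\<not> ?P x"
      using hd_dropWhile[of ?P xs] sorted_dropWhile[OF sorted, of ?P]
      by (cases "dropWhile ?P xs") auto
  qed
  show ?thesis
  proof
    assume "?P (xs ! i)"
    then have "?P (xs ! j)" if "j < Suc i" for j
      using sorted_nth_mono[OF sorted, of j i] that i by simp
    then show "i < length (filter ?P xs)"
      unfolding filter_eq using length_takeWhile_less_P_nth[of "Suc i" ?P xs] i by simp
  next
    assume "i < length (filter ?P xs)"
    then show "?P (xs ! i)"
      unfolding filter_eq by (metis nth_mem set_takeWhileD takeWhile_nth)
  qed
qed

lemma sort_nth_le_iff_less_length_filter:
  fixes xs :: "'a::linorder list"
  assumes "i < length xs"
  shows "sort xs ! i \<le> t \<longleftrightarrow> i < length (filter (\<lambda>x. x \<le> t) xs)"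
proof -
  have "length (filter (\<lambda>x. x \<le> t) (sort xs)) = length (filter (\<lambda>x. x \<le> t) xs)"
    by (simp add: filter_sort)
  then show ?thesis
    using sorted_nth_le_iff_less_length_filter[of "sort xs" i t] assms by simp
qed

lemma borel_measurable_card_Collect:
  assumes "finite J" and "\<And>j. j \<in> J \<Longrightarrow> {w \<in> space M. P j w} \<in> sets M"
  shows "(\<lambda>w. real (card {j \<in> J. P j w})) \<in> borel_measurable M"
proof -
  have "real (card {j \<in> J. P j w}) = (\<Sum>j\<in>J. indicator {w \<in> space M. P j w} w)" if "w \<in> space M" for w
    using assms(1) that by (simp add: indicator_def sum.If_cases Int_def conj_commute)
  moreover have "(\<lambda>w. \<Sum>j\<in>J. indicator {w \<in> space M. P j w} w :: real) \<in> borel_measurable M"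
    using assms(2) by (intro borel_measurable_sum borel_measurable_indicator)
  ultimately show ?thesis
    by (simp cong: measurable_cong)
qed

lemma med_measurable:
  assumes k: "1 \<le> k" and f: "\<And>l. l \<in> {1..k} \<Longrightarrow> f l \<in> borel_measurable M"
  shows "(\<lambda>w. med k (\<lambda>l. f l w)) \<in> borel_measurable M"
  unfolding borel_measurable_iff_le
proof
  fix a :: real
  define idx where "idx = (if even k then k div 2 - 1 else k div 2)"
  have "med k (\<lambda>l. f l w) \<le> a \<longleftrightarrow> real idx < real (card {l \<in> {1..k}. f l w \<le> a})" for w
  proof -
    have "med k (\<lambda>l. f l w) = sort (map (\<lambda>l. f l w) [1..<k+1]) ! idx"
      unfolding med_def idx_def Let_def by (cases "even k") (simp_all only: if_True if_False)
    moreover have "idx < length (map (\<lambda>l. f l w) [1..<k+1])"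
      using k unfolding idx_def by auto
    moreover have "length (filter (\<lambda>x. x \<le> a) (map (\<lambda>l. f l w) [1..<k+1]))
        = card {l \<in> {1..k}. f l w \<le> a}"
      unfolding length_filter_map distinct_length_filter[OF distinct_upt] set_upt
      by (intro arg_cong[where f=card]) auto
    ultimately show ?thesis
      by (simp add: sort_nth_le_iff_less_length_filter)
  qed
  moreover have "(\<lambda>w. real (card {l \<in> {1..k}. f l w \<le> a})) \<in> borel_measurable M"
    using f by (intro borel_measurable_card_Collect) measurable
  then have "{w \<in> space M. real idx < real (card {l \<in> {1..k}. f l w \<le> a})} \<in> sets M"
    by measurable
  ultimately show "{w \<in> space M. med k (\<lambda>l. f l w) \<le> a} \<in> sets M"
    by presburger
qed

lemma mom_measurable:
  assumes k: "1 \<le> k" and x: "\<And>i. i \<in> {1..n} \<Longrightarrow> x i \<in> borel_measurable M"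
  shows "(\<lambda>w. mom n k (\<lambda>i. x i w)) \<in> borel_measurable M"
  unfolding mom_def
proof (rule med_measurable[OF k])
  fix l
  have "(\<lambda>w. \<Sum>i\<in>block n k l. x i w) \<in> borel_measurable M"
    using x by (intro borel_measurable_sum) (auto simp: block_def)
  then show "(\<lambda>w. (\<Sum>i\<in>block n k l. x i w) / real (card (block n k l))) \<in> borel_measurable M"
    by measurable
qed

lemma Sstat_measurable:
  assumes k: "1 \<le> k" and x: "\<And>i. i \<in> {1..n} \<Longrightarrow> x i \<in> borel_measurable M"
    and a: "\<And>i j. i \<in> {1..n} \<Longrightarrow> j \<in> {1..<m} \<Longrightarrow> a i j \<in> borel_measurable M"
    and j: "j < m"
  shows "(\<lambda>w. Sstat n k (\<lambda>i. x i w) (\<lambda>i j. a i j w) \<theta> j) \<in> borel_measurable M"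
proof (cases "j = 0")
  case True
  have "(\<lambda>w. mom n k (\<lambda>i. x i w)) \<in> borel_measurable M"
    using k x by (rule mom_measurable)
  then show ?thesis
    using True unfolding Sstat_def Dset_def by simp
next
  case False
  have "(\<lambda>w. mom n k (\<lambda>i. a i j w * (x i w - \<theta>) + \<theta>)) \<in> borel_measurable M"
    using k x a False j by (intro mom_measurable) auto
  then show ?thesis
    using False unfolding Sstat_def Dset_def by simp
qed

lemma rank_R_le_measurable:
  assumes k: "1 \<le> k" and x: "\<And>i. i \<in> {1..n} \<Longrightarrow> x i \<in> borel_measurable M"
    and a: "\<And>i j. i \<in> {1..n} \<Longrightarrow> j \<in> {1..<m} \<Longrightarrow> a i j \<in> borel_measurable M"
    and p: "p \<in> measurable M (count_space UNIV)"
  shows "{w \<in> space M. rank_R n k m (\<lambda>i. x i w) (\<lambda>i j. a i j w) (p w) \<theta> \<le> t} \<in> sets M"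
proof -
  let ?S = "\<lambda>w. Sstat n k (\<lambda>i. x i w) (\<lambda>i j. a i j w) \<theta>"
  have "{w \<in> space M. prec_pi (p w) (?S w) 0 j} \<in> sets M" if j: "j \<in> {1..<m}" for j
  proof -
    have [measurable]: "(\<lambda>w. ?S w 0) \<in> borel_measurable M" "(\<lambda>w. ?S w j) \<in> borel_measurable M"
      using Sstat_measurable[OF k x a] j by auto
    have [measurable]: "{w \<in> space M. p w 0 < p w j} \<in> sets M"
      using measurable_sets[OF p, of "{q. q 0 < q j}"] by (simp add: vimage_def Int_def conj_commute)
    show ?thesis
      unfolding prec_pi_def by measurable
  qed
  then have "(\<lambda>w. real (card {j \<in> {1..<m}. prec_pi (p w) (?S w) 0 j})) \<in> borel_measurable M"
    by (intro borel_measurable_card_Collect) auto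
  then have meas: "{w \<in> space M. 1 + real (card {j \<in> {1..<m}. prec_pi (p w) (?S w) 0 j}) \<le> real t} \<in> sets M"
    by measurable
  have "{w \<in> space M. rank_R n k m (\<lambda>i. x i w) (\<lambda>i j. a i j w) (p w) \<theta> \<le> t}
      = {w \<in> space M. 1 + real (card {j \<in> {1..<m}. prec_pi (p w) (?S w) 0 j}) \<le> real t}"
    unfolding rank_R_def by (intro Collect_cong conj_cong refl) linarith
  with meas show ?thesis
    by (simp only:)
qed

lemma rank_R_le_sets_PiM:
  assumes "1 \<le> k"
  shows "{y \<in> space (PiM {1..n} (\<lambda>_. borel)). rank_R n k m y a p \<theta> \<le> t} \<in> sets (PiM {1..n} (\<lambda>_. borel))"
  using rank_R_le_measurable[OF assms, of n "\<lambda>i y. y i" "PiM {1..n} (\<lambda>_. borel)" m "\<lambda>i j y. a i j" "\<lambda>y. p"]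
  by (simp add: measurable_component_singleton)

lemma measurable_sign_flip [measurable]:
  "sign_flip I \<mu> s \<in> measurable (PiM I (\<lambda>_. borel)) (PiM I (\<lambda>_. borel))"
  unfolding sign_flip_def by measurable

lemma singleton_sets_PiM:
  assumes "finite I" "a \<in> extensional I"
  shows "{a} \<in> sets (PiM I (\<lambda>_. borel :: 'b::t1_space measure))"
  using sets_PiM_I_finite[OF assms(1), of "\<lambda>i. {a i}"] unfolding PiE_singleton[OF assms(2)] by simp

section \<open>Random signs and symmetric data\<close>

lemma (in prob_space) prob_eq_sum_finite_values:
  assumes "finite F" and "AE w in M. V w \<in> F"
    and "{w \<in> space M. P (V w) w} \<in> events" and "\<And>v. v \<in> F \<Longrightarrow> {w \<in> space M. P v w \<and> V w = v} \<in> events"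
  shows "prob {w \<in> space M. P (V w) w} = (\<Sum>v\<in>F. prob {w \<in> space M. P v w \<and> V w = v})"
  using assms(1,4,3)
proof (rule prob_sum)
  show "AE w in M. (\<forall>v\<in>F. P v w \<and> V w = v \<longrightarrow> P (V w) w) \<and> (P (V w) w \<longrightarrow> (\<exists>!v\<in>F. P v w \<and> V w = v))"
    using assms(2) by eventually_elim auto
qed

lemma (in prob_space) sum_prob_eq_of_card_const:
  assumes "finite I" and B: "\<And>i. i \<in> I \<Longrightarrow> B i \<in> events"
    and c: "\<And>x. x \<in> space M \<Longrightarrow> card {i \<in> I. x \<in> B i} = c"
  shows "(\<Sum>i\<in>I. prob (B i)) = real c"
proof -
  have "(\<Sum>i\<in>I. prob (B i)) = (\<Sum>i\<in>I. expectation (indicator (B i)))"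
    using B by (simp add: Int_absorb2 sets.sets_into_space)
  also have "\<dots> = expectation (\<lambda>x. \<Sum>i\<in>I. indicator (B i) x)"
    by (rule Bochner_Integration.integral_sum[symmetric]) (use B in \<open>auto simp: less_top[symmetric]\<close>)
  also have "\<dots> = expectation (\<lambda>x. real c)"
    using assms(1) c by (intro Bochner_Integration.integral_cong) (simp_all add: indicator_def Int_def conj_commute)
  also have "\<dots> = real c"
    by (simp add: prob_space)
  finally show ?thesis .
qed

lemma (in prob_space) AE_sign_vector:
  assumes "finite I" and Z: "\<And>i. i \<in> I \<Longrightarrow> Z i \<in> borel_measurable M"
    and half: "\<And>i. i \<in> I \<Longrightarrow> prob {w \<in> space M. Z i w = 1} = 1/2 \<and> prob {w \<in> space M. Z i w = -1} = 1/2"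
  shows "AE w in M. (\<lambda>i\<in>I. Z i w) \<in> sign_vectors I"
proof -
  have "AE w in M. Z i w \<in> {-1, 1}" if i: "i \<in> I" for i
  proof -
    have [measurable]: "Z i \<in> borel_measurable M"
      using Z[OF i] .
    have "prob ({w \<in> space M. Z i w = -1} \<union> {w \<in> space M. Z i w = 1}) = 1"
      using half[OF i] by (subst finite_measure_Union) auto
    moreover have "{w \<in> space M. Z i w = -1} \<union> {w \<in> space M. Z i w = 1} = {w \<in> space M. Z i w \<in> {-1, 1}}"
      by auto
    ultimately show ?thesis
      using prob_eq_1[of "{w \<in> space M. Z i w \<in> {-1, 1}}"] by simp
  qed
  with assms(1) have "AE w in M. \<forall>i\<in>I. Z i w \<in> {-1, 1}"
    by (rule AE_finite_allI)
  then show ?thesis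
    by eventually_elim (simp add: sign_vectors_def restrict_PiE_iff)
qed

lemma (in prob_space) prob_sign_vector_eq:
  assumes "finite I" and indep: "indep_vars (\<lambda>_. borel) Z I"
    and half: "\<And>i. i \<in> I \<Longrightarrow> prob {w \<in> space M. Z i w = 1} = 1/2 \<and> prob {w \<in> space M. Z i w = -1} = 1/2"
    and a: "a \<in> sign_vectors I"
  shows "prob {w \<in> space M. (\<lambda>i\<in>I. Z i w) = a} = (1/2) ^ card I"
proof (cases "I = {}")
  case True
  then have "{w \<in> space M. (\<lambda>i\<in>I. Z i w) = a} = space M"
    using sign_vectors_extensional[OF a] by auto
  then show ?thesis
    using True by (simp add: prob_space)
next
  case False
  have "{w \<in> space M. (\<lambda>i\<in>I. Z i w) = a} = (\<Inter>i\<in>I. Z i -` {a i} \<inter> space M)"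
  proof (intro set_eqI iffI)
    fix w assume "w \<in> (\<Inter>i\<in>I. Z i -` {a i} \<inter> space M)"
    then have "w \<in> space M" and "(\<lambda>i\<in>I. Z i w) = a"
      using False by (auto intro: extensionalityI[OF _ sign_vectors_extensional[OF a]])
    then show "w \<in> {w \<in> space M. (\<lambda>i\<in>I. Z i w) = a}"
      by simp
  qed (use False in auto)
  also have "prob \<dots> = (\<Prod>i\<in>I. prob (Z i -` {a i} \<inter> space M))"
    using indep False assms(1) by (rule indep_varsD_finite) simp
  also have "\<dots> = (\<Prod>i\<in>I. 1/2)"
  proof (rule prod.cong[OF refl])
    fix i assume i: "i \<in> I"
    have "Z i -` {a i} \<inter> space M = {w \<in> space M. Z i w = a i}"
      by auto
    then show "prob (Z i -` {a i} \<inter> space M) = 1/2"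
      using half[OF i] sign_vectors_mem[OF a i] by auto
  qed
  finally show ?thesis
    by simp
qed

lemma (in prob_space) sign_matrix_law:
  fixes \<alpha> :: "'i \<Rightarrow> 'j \<Rightarrow> 'a \<Rightarrow> real"
  assumes "finite A" "finite B" and indep: "indep_vars (\<lambda>_. borel) (\<lambda>(i, j). \<alpha> i j) (A \<times> B)"
    and half: "\<And>i j. i \<in> A \<Longrightarrow> j \<in> B \<Longrightarrow>
      prob {w \<in> space M. \<alpha> i j w = 1} = 1/2 \<and> prob {w \<in> space M. \<alpha> i j w = -1} = 1/2"
  shows "AE w in M. (\<lambda>ij\<in>A \<times> B. \<alpha> (fst ij) (snd ij) w) \<in> sign_vectors (A \<times> B)"
    and "a \<in> sign_vectors (A \<times> B) \<Longrightarrow>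
      prob {w \<in> space M. (\<lambda>ij\<in>A \<times> B. \<alpha> (fst ij) (snd ij) w) = a} = (1/2) ^ (card A * card B)"
proof -
  have finite: "finite (A \<times> B)"
    using assms(1,2) by simp
  have split: "(\<lambda>ij\<in>A \<times> B. (\<lambda>(i, j). \<alpha> i j) ij w) = (\<lambda>ij\<in>A \<times> B. \<alpha> (fst ij) (snd ij) w)" for w
    by (simp add: split_beta)
  have half': "prob {w \<in> space M. (\<lambda>(i, j). \<alpha> i j) ij w = 1} = 1/2 \<and>
      prob {w \<in> space M. (\<lambda>(i, j). \<alpha> i j) ij w = -1} = 1/2" if "ij \<in> A \<times> B" for ij
    using half that by (auto simp: split_beta)
  have "(\<lambda>(i, j). \<alpha> i j) ij \<in> borel_measurable M" if "ij \<in> A \<times> B" for ij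
    using indep that by (auto simp: indep_vars_def)
  from AE_sign_vector[where Z="\<lambda>(i, j). \<alpha> i j", OF finite this half']
  show "AE w in M. (\<lambda>ij\<in>A \<times> B. \<alpha> (fst ij) (snd ij) w) \<in> sign_vectors (A \<times> B)"
    unfolding split .
  show "prob {w \<in> space M. (\<lambda>ij\<in>A \<times> B. \<alpha> (fst ij) (snd ij) w) = a} = (1/2) ^ (card A * card B)"
    if "a \<in> sign_vectors (A \<times> B)"
    using prob_sign_vector_eq[OF finite indep half' that] unfolding split by (simp add: card_cartesian_product)
qed

lemma distr_reflect_eq_if_symmetric:
  fixes X :: "'a \<Rightarrow> real"
  assumes [measurable]: "X \<in> borel_measurable M"
    and symm: "distr M borel (\<lambda>w. X w - \<mu>) = distr M borel (\<lambda>w. \<mu> - X w)"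
  shows "distr (distr M borel X) borel (\<lambda>t. 2 * \<mu> - t) = distr M borel X"
proof -
  have "distr M borel X = distr M borel ((\<lambda>t. t + \<mu>) \<circ> (\<lambda>w. X w - \<mu>))"
    by (simp add: comp_def)
  also have "\<dots> = distr (distr M borel (\<lambda>w. X w - \<mu>)) borel (\<lambda>t. t + \<mu>)"
    by (rule distr_distr[symmetric]) simp_all
  also have "\<dots> = distr (distr M borel (\<lambda>w. \<mu> - X w)) borel (\<lambda>t. t + \<mu>)"
    by (simp only: symm)
  also have "\<dots> = distr M borel ((\<lambda>t. 2 * \<mu> - t) \<circ> X)"
    by (subst distr_distr) (simp_all add: comp_def)
  also have "\<dots> = distr (distr M borel X) borel (\<lambda>t. 2 * \<mu> - t)"
    by (rule distr_distr[symmetric]) simp_all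
  finally show ?thesis
    by simp
qed

lemma (in prob_space) distr_identical_indep_vars_eq_PiM:
  assumes "indep_vars (\<lambda>_. borel) Y I" "I \<noteq> {}" "\<And>i. i \<in> I \<Longrightarrow> distr M borel (Y i) = D"
  shows "distr M (PiM I (\<lambda>_. borel)) (\<lambda>w. \<lambda>i\<in>I. Y i w) = PiM I (\<lambda>_. D)"
proof -
  have "distr M (PiM I (\<lambda>_. borel)) (\<lambda>w. \<lambda>i\<in>I. Y i w) = PiM I (\<lambda>i. distr M borel (Y i))"
    using assms(1,2) by (intro indep_vars_iff_distr_eq_PiM'[THEN iffD1]) (auto simp: indep_vars_def)
  also have "\<dots> = PiM I (\<lambda>_. D)"
    using assms(3) by (rule PiM_cong[OF refl])
  finally show ?thesis .
qed

lemma distr_sign_eq_if_reflect_eq: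
  fixes D :: "real measure"
  assumes "sets D = sets borel" and reflect: "distr D borel (\<lambda>t. 2 * \<mu> - t) = D" and "\<sigma> \<in> {-1, 1}"
  shows "distr D borel (\<lambda>t. \<mu> + \<sigma> * (t - \<mu>)) = D"
proof (cases "\<sigma> = 1")
  case True
  then show ?thesis
    using assms(1) by (simp add: distr_id2)
next
  case False
  then have "(\<lambda>t. \<mu> + \<sigma> * (t - \<mu>)) = (\<lambda>t. 2 * \<mu> - t)"
    using assms(3) by (auto simp: fun_eq_iff algebra_simps)
  then show ?thesis
    using reflect by simp
qed

lemma (in prob_space) distr_sign_flip_eq:
  fixes X :: "'i \<Rightarrow> 'a \<Rightarrow> real"
  assumes indep: "indep_vars (\<lambda>_. borel) X I" and i0: "i0 \<in> I"
    and ident: "\<And>i. i \<in> I \<Longrightarrow> distr M borel (X i) = distr M borel (X i0)"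
    and symm: "distr M borel (\<lambda>w. X i0 w - \<mu>) = distr M borel (\<lambda>w. \<mu> - X i0 w)"
    and s: "s \<in> sign_vectors I"
  shows "distr (distr M (PiM I (\<lambda>_. borel)) (\<lambda>w. \<lambda>i\<in>I. X i w)) (PiM I (\<lambda>_. borel)) (sign_flip I \<mu> s)
    = distr M (PiM I (\<lambda>_. borel)) (\<lambda>w. \<lambda>i\<in>I. X i w)"
proof -
  define D where "D = distr M borel (X i0)"
  define g where "g = (\<lambda>i t. \<mu> + s i * (t - \<mu>))"
  have g [measurable]: "g i \<in> borel_measurable borel" for i
    unfolding g_def by measurable
  have X [measurable]: "X i \<in> borel_measurable M" if "i \<in> I" for i
    using indep that by (auto simp: indep_vars_def)
  have reflect: "distr D borel (\<lambda>t. 2 * \<mu> - t) = D"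
    unfolding D_def using X[OF i0] symm by (rule distr_reflect_eq_if_symmetric)
  have sets_D: "sets D = sets borel"
    unfolding D_def by simp
  have gX: "distr M borel (\<lambda>w. g i (X i w)) = D" if i: "i \<in> I" for i
  proof -
    have "distr M borel (\<lambda>w. g i (X i w)) = distr D borel (g i)"
      unfolding D_def ident[OF i, symmetric] by (simp add: distr_distr[OF g X[OF i]] comp_def)
    also have "\<dots> = D"
      unfolding g_def using distr_sign_eq_if_reflect_eq[OF sets_D reflect sign_vectors_mem[OF s i]] .
    finally show ?thesis .
  qed
  have "indep_vars (\<lambda>_. borel) (\<lambda>i w. g i (X i w)) I"
    using indep by (rule indep_vars_compose2) simp
  then have law_flipped: "distr M (PiM I (\<lambda>_. borel)) (\<lambda>w. \<lambda>i\<in>I. g i (X i w)) = PiM I (\<lambda>_. D)"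
    by (rule distr_identical_indep_vars_eq_PiM[OF _ _ gX]) (use i0 in blast)+
  have law: "distr M (PiM I (\<lambda>_. borel)) (\<lambda>w. \<lambda>i\<in>I. X i w) = PiM I (\<lambda>_. D)"
    by (rule distr_identical_indep_vars_eq_PiM[OF indep _ ident[folded D_def]]) (use i0 in blast)
  have "sign_flip I \<mu> s \<circ> (\<lambda>w. \<lambda>i\<in>I. X i w) = (\<lambda>w. \<lambda>i\<in>I. g i (X i w))"
    by (auto simp: sign_flip_def g_def fun_eq_iff)
  then have "distr (distr M (PiM I (\<lambda>_. borel)) (\<lambda>w. \<lambda>i\<in>I. X i w)) (PiM I (\<lambda>_. borel)) (sign_flip I \<mu> s)
      = distr M (PiM I (\<lambda>_. borel)) (\<lambda>w. \<lambda>i\<in>I. g i (X i w))"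
    by (subst distr_distr) simp_all
  also have "\<dots> = distr M (PiM I (\<lambda>_. borel)) (\<lambda>w. \<lambda>i\<in>I. X i w)"
    unfolding law_flipped law ..
  finally show ?thesis .
qed

section \<open>Coverage of the confidence set\<close>

lemma sum_measure_sign_flip_rank_R_le:
  fixes Q :: "(nat \<Rightarrow> real) measure" and \<mu> :: real and n k m t :: nat
  defines "R \<equiv> \<lambda>a p. {y \<in> space (PiM {1..n} (\<lambda>_. borel)). rank_R n k m y (\<lambda>i j. a (i, j)) p \<mu> \<le> t}"
  defines "F \<equiv> (sign_vectors {1..n} \<times> sign_vectors ({1..n} \<times> {1..<m})) \<times> {p. p permutes {..<m}}"
  assumes Q: "prob_space Q" and sets_Q: "sets Q = sets (PiM {1..n} (\<lambda>_. borel))"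
    and k: "1 \<le> k" and t: "t \<le> m" and m: "1 \<le> m"
  shows "real m * (\<Sum>z\<in>F. measure Q (sign_flip {1..n} \<mu> (fst (fst z)) -` R (snd (fst z)) (snd z) \<inter> space Q))
    = real t * 2 ^ (n * m) * fact m"
proof -
  interpret Q: prob_space Q
    by (rule Q)
  define c where "c = t * 2 ^ (n * m) * fact m div m"
  have "m dvd t * 2 ^ (n * m) * fact m"
    using m by (simp add: dvd_fact)
  then have c: "real m * real c = real t * 2 ^ (n * m) * fact m"
    unfolding c_def by (metis dvd_mult_div_cancel of_nat_fact of_nat_mult of_nat_numeral of_nat_power)
  have space_Q: "space Q = space (PiM {1..n} (\<lambda>_. borel))"
    using sets_Q by (rule sets_eq_imp_space_eq)
  have "(\<Sum>z\<in>F. measure Q (sign_flip {1..n} \<mu> (fst (fst z)) -` R (snd (fst z)) (snd z) \<inter> space Q)) = real c"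
  proof (rule Q.sum_prob_eq_of_card_const)
    show "finite F"
      unfolding F_def by (intro finite_cartesian_product finite_sign_vectors finite_permutations) auto
    have "sign_flip {1..n} \<mu> s \<in> measurable Q (PiM {1..n} (\<lambda>_. borel))" for s
      using measurable_sign_flip by (simp add: measurable_cong_sets[OF sets_Q refl])
    then show "sign_flip {1..n} \<mu> (fst (fst z)) -` R (snd (fst z)) (snd z) \<inter> space Q \<in> Q.events" for z
      using rank_R_le_sets_PiM[OF k] unfolding R_def by (rule measurable_sets)
    fix y assume y: "y \<in> space Q"
    have "sign_flip {1..n} \<mu> s y \<in> space Q" for s
      unfolding space_Q by (simp add: sign_flip_def space_PiM)
    then have "{z \<in> F. y \<in> sign_flip {1..n} \<mu> (fst (fst z)) -` R (snd (fst z)) (snd z) \<inter> space Q}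
        = {z \<in> F. rank_R n k m (sign_flip {1..n} \<mu> (fst (fst z)) y) (\<lambda>i j. snd (fst z) (i, j)) (snd z) \<mu> \<le> t}"
      using y by (auto simp: R_def space_Q)
    moreover have "c = m * card {z \<in> F.
        rank_R n k m (sign_flip {1..n} \<mu> (fst (fst z)) y) (\<lambda>i j. snd (fst z) (i, j)) (snd z) \<mu> \<le> t} div m"
      unfolding c_def F_def card_rank_R_sign_flip_le[OF t m] ..
    ultimately show "card {z \<in> F. y \<in> sign_flip {1..n} \<mu> (fst (fst z)) -` R (snd (fst z)) (snd z) \<inter> space Q} = c"
      using m by simp
  qed
  with c show ?thesis
    by simp
qed

lemma sum_measure_rank_R_le:
  fixes Q :: "(nat \<Rightarrow> real) measure" and \<mu> :: real and n k m t :: nat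
  defines "R \<equiv> \<lambda>a p. {y \<in> space (PiM {1..n} (\<lambda>_. borel)). rank_R n k m y (\<lambda>i j. a (i, j)) p \<mu> \<le> t}"
  assumes Q: "prob_space Q" and sets_Q: "sets Q = sets (PiM {1..n} (\<lambda>_. borel))"
    and flip: "\<And>s. s \<in> sign_vectors {1..n} \<Longrightarrow> distr Q (PiM {1..n} (\<lambda>_. borel)) (sign_flip {1..n} \<mu> s) = Q"
    and k: "1 \<le> k" and t: "t \<le> m" and m: "1 \<le> m"
  shows "(\<Sum>x \<in> sign_vectors ({1..n} \<times> {1..<m}) \<times> {p. p permutes {..<m}}. measure Q (R (fst x) (snd x)))
    = real t / real m * 2 ^ (n * (m - 1)) * fact m"
proof -
  let ?SN = "sign_vectors {1..n}" and ?SG = "sign_vectors ({1..n} \<times> {1..<m})"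
    and ?P = "{p. p permutes {..<m}}"
  let ?S = "\<Sum>x \<in> ?SG \<times> ?P. measure Q (R (fst x) (snd x))"
  have flip_invariant: "measure Q (sign_flip {1..n} \<mu> s -` R a p \<inter> space Q) = measure Q (R a p)"
    if "s \<in> ?SN" for s a p
  proof -
    have "sign_flip {1..n} \<mu> s \<in> measurable Q (PiM {1..n} (\<lambda>_. borel))"
      using measurable_sign_flip by (simp add: measurable_cong_sets[OF sets_Q refl])
    from measure_distr[OF this rank_R_le_sets_PiM[OF k]] show ?thesis
      unfolding flip[OF that] R_def ..
  qed
  have "(\<Sum>z \<in> (?SN \<times> ?SG) \<times> ?P. measure Q (sign_flip {1..n} \<mu> (fst (fst z)) -` R (snd (fst z)) (snd z) \<inter> space Q))
      = (\<Sum>s\<in>?SN. \<Sum>a\<in>?SG. \<Sum>p\<in>?P. measure Q (sign_flip {1..n} \<mu> s -` R a p \<inter> space Q))"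
    by (simp add: sum.cartesian_product')
  also have "\<dots> = (\<Sum>s\<in>?SN. \<Sum>a\<in>?SG. \<Sum>p\<in>?P. measure Q (R a p))"
    using flip_invariant by simp
  also have "\<dots> = 2 ^ n * ?S"
    by (simp add: sum.cartesian_product' card_sign_vectors)
  finally have count: "real m * (2 ^ n * ?S) = real t * 2 ^ (n * m) * fact m"
    using sum_measure_sign_flip_rank_R_le[OF Q sets_Q k t m, of \<mu>] unfolding R_def by simp
  have "n * m = n + n * (m - 1)"
    using m by (cases m) simp_all
  then have pow: "(2::real) ^ (n * m) = 2 ^ n * 2 ^ (n * (m - 1))"
    by (simp only: power_add)
  have "2 ^ n * (real m * ?S) = real m * (2 ^ n * ?S)"
    by (simp only: ac_simps)
  also have "\<dots> = 2 ^ n * (real t * 2 ^ (n * (m - 1)) * fact m)"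
    unfolding count pow by (simp only: ac_simps)
  finally have "real m * ?S = real t * 2 ^ (n * (m - 1)) * fact m"
    by simp
  then show ?thesis
    using m by (simp add: field_simps)
qed

lemma (in prob_space) prob_rank_R_le_eq_sum:
  fixes X :: "nat \<Rightarrow> 'a \<Rightarrow> real" and \<alpha> :: "nat \<Rightarrow> nat \<Rightarrow> 'a \<Rightarrow> real" and \<pi> :: "'a \<Rightarrow> nat \<Rightarrow> nat"
    and n k m t :: nat and \<theta> :: real
  defines "Y \<equiv> \<lambda>w. \<lambda>i\<in>{1..n}. X i w"
    and "A \<equiv> \<lambda>w. \<lambda>ij\<in>{1..n} \<times> {1..<m}. \<alpha> (fst ij) (snd ij) w"
    and "R \<equiv> \<lambda>a p. {y \<in> space (PiM {1..n} (\<lambda>_. borel)). rank_R n k m y (\<lambda>i j. a (i, j)) p \<theta> \<le> t}"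
  assumes k: "1 \<le> k"
    and X: "\<And>i. i \<in> {1..n} \<Longrightarrow> X i \<in> borel_measurable M"
    and \<alpha>: "\<And>i j. i \<in> {1..n} \<Longrightarrow> j \<in> {1..<m} \<Longrightarrow> \<alpha> i j \<in> borel_measurable M"
    and \<pi>: "\<pi> \<in> measurable M (count_space UNIV)" "\<And>w. w \<in> space M \<Longrightarrow> \<pi> w permutes {..<m}"
    and signs: "AE w in M. A w \<in> sign_vectors ({1..n} \<times> {1..<m})"
    and indep: "\<And>B a p. B \<in> sets (PiM {1..n} (\<lambda>_. borel)) \<Longrightarrow> a \<in> sign_vectors ({1..n} \<times> {1..<m}) \<Longrightarrow>
      prob {w \<in> space M. Y w \<in> B \<and> A w = a \<and> \<pi> w = p}
        = prob {w \<in> space M. Y w \<in> B} * prob {w \<in> space M. A w = a} * prob {w \<in> space M. \<pi> w = p}"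
    and signs_law: "\<And>a. a \<in> sign_vectors ({1..n} \<times> {1..<m}) \<Longrightarrow> prob {w \<in> space M. A w = a} = c_signs"
    and perm_law: "\<And>p. p permutes {..<m} \<Longrightarrow> prob {w \<in> space M. \<pi> w = p} = c_perm"
  shows "prob {w \<in> space M. rank_R n k m (\<lambda>i. X i w) (\<lambda>i j. \<alpha> i j w) (\<pi> w) \<theta> \<le> t}
    = (\<Sum>x \<in> sign_vectors ({1..n} \<times> {1..<m}) \<times> {p. p permutes {..<m}}.
        measure (distr M (PiM {1..n} (\<lambda>_. borel)) Y) (R (fst x) (snd x))) * c_signs * c_perm"
proof -
  let ?IJ = "{1..n} \<times> {1..<m}"
  let ?SP = "sign_vectors ?IJ \<times> {p. p permutes {..<m}}"
  let ?PN = "PiM {1..n} (\<lambda>_. borel) :: (nat \<Rightarrow> real) measure"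
  have Y: "Y \<in> measurable M ?PN"
    unfolding Y_def using X by (rule measurable_restrict)
  have A: "A \<in> measurable M (PiM ?IJ (\<lambda>_. borel))"
    unfolding A_def using \<alpha> by (intro measurable_restrict) auto
  have R_sets: "R a p \<in> sets ?PN" for a p
    unfolding R_def by (rule rank_R_le_sets_PiM[OF k])
  have rank_eq: "rank_R n k m (\<lambda>i. X i w) (\<lambda>i j. \<alpha> i j w) (\<pi> w) \<theta> \<le> t \<longleftrightarrow> Y w \<in> R (A w) (\<pi> w)" for w
  proof -
    have "rank_R n k m (\<lambda>i. X i w) (\<lambda>i j. \<alpha> i j w) (\<pi> w) \<theta> = rank_R n k m (Y w) (\<lambda>i j. A w (i, j)) (\<pi> w) \<theta>"
      unfolding Y_def A_def by (rule rank_R_cong) auto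
    then show ?thesis
      by (simp add: R_def Y_def space_PiM)
  qed
  have "prob {w \<in> space M. rank_R n k m (\<lambda>i. X i w) (\<lambda>i j. \<alpha> i j w) (\<pi> w) \<theta> \<le> t}
      = prob {w \<in> space M. Y w \<in> R (fst (A w, \<pi> w)) (snd (A w, \<pi> w))}"
    by (simp add: rank_eq)
  also have "\<dots> = (\<Sum>x\<in>?SP. prob {w \<in> space M. Y w \<in> R (fst x) (snd x) \<and> (A w, \<pi> w) = x})"
  proof (rule prob_eq_sum_finite_values)
    show "finite ?SP"
      by (intro finite_cartesian_product finite_sign_vectors finite_permutations) auto
    show "AE w in M. (A w, \<pi> w) \<in> ?SP"
      using signs \<pi>(2) by (auto elim: AE_mp intro: AE_I2)
    have "{w \<in> space M. rank_R n k m (\<lambda>i. X i w) (\<lambda>i j. \<alpha> i j w) (\<pi> w) \<theta> \<le> t} \<in> events"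
      using X \<alpha> \<pi>(1) by (rule rank_R_le_measurable[OF k])
    then show "{w \<in> space M. Y w \<in> R (fst (A w, \<pi> w)) (snd (A w, \<pi> w))} \<in> events"
      by (simp add: rank_eq)
    show "{w \<in> space M. Y w \<in> R (fst x) (snd x) \<and> (A w, \<pi> w) = x} \<in> events" if "x \<in> ?SP" for x
    proof -
      have "{fst x} \<in> sets (PiM ?IJ (\<lambda>_. borel))"
        using that by (intro singleton_sets_PiM) (auto simp: sign_vectors_extensional)
      moreover have "{w \<in> space M. Y w \<in> R (fst x) (snd x) \<and> (A w, \<pi> w) = x}
          = (Y -` R (fst x) (snd x) \<inter> space M) \<inter> (A -` {fst x} \<inter> space M) \<inter> (\<pi> -` {snd x} \<inter> space M)"
        by auto
      ultimately show ?thesis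
        using measurable_sets[OF Y R_sets] measurable_sets[OF A] measurable_sets[OF \<pi>(1)] by auto
    qed
  qed
  also have "\<dots> = (\<Sum>x\<in>?SP. measure (distr M ?PN Y) (R (fst x) (snd x)) * c_signs * c_perm)"
  proof (rule sum.cong[OF refl])
    fix x assume "x \<in> ?SP"
    then have a: "fst x \<in> sign_vectors ?IJ" and p: "snd x permutes {..<m}"
      by auto
    have "prob {w \<in> space M. Y w \<in> R (fst x) (snd x)} = measure (distr M ?PN Y) (R (fst x) (snd x))"
      using measure_distr[OF Y R_sets] by (simp add: vimage_def Int_def conj_commute)
    then show "prob {w \<in> space M. Y w \<in> R (fst x) (snd x) \<and> (A w, \<pi> w) = x}
        = measure (distr M ?PN Y) (R (fst x) (snd x)) * c_signs * c_perm"
      using indep[OF R_sets a] signs_law[OF a] perm_law[OF p] by (simp add: prod_eq_iff)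
  qed
  finally show ?thesis
    by (simp add: sum_distrib_right)
qed

lemma (in prob_space) sum_measure_rank_R_le_symmetric_iid:
  fixes X :: "nat \<Rightarrow> 'a \<Rightarrow> real" and n k m t :: nat and \<mu> :: real
  defines "R \<equiv> \<lambda>a p. {y \<in> space (PiM {1..n} (\<lambda>_. borel)). rank_R n k m y (\<lambda>i j. a (i, j)) p \<mu> \<le> t}"
  assumes indep: "indep_vars (\<lambda>_. borel) X {1..n}"
    and ident: "\<And>i. i \<in> {1..n} \<Longrightarrow> distr M borel (X i) = distr M borel (X 1)"
    and symm: "distr M borel (\<lambda>w. X 1 w - \<mu>) = distr M borel (\<lambda>w. \<mu> - X 1 w)"
    and "1 \<le> n" "1 \<le> k" "t \<le> m" "1 \<le> m"
  shows "(\<Sum>x \<in> sign_vectors ({1..n} \<times> {1..<m}) \<times> {p. p permutes {..<m}}.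
      measure (distr M (PiM {1..n} (\<lambda>_. borel)) (\<lambda>w. \<lambda>i\<in>{1..n}. X i w)) (R (fst x) (snd x)))
    = real t / real m * 2 ^ (n * (m - 1)) * fact m"
  unfolding R_def
proof (rule sum_measure_rank_R_le)
  have "X i \<in> borel_measurable M" if "i \<in> {1..n}" for i
    using indep that by (auto simp: indep_vars_def)
  then show "prob_space (distr M (PiM {1..n} (\<lambda>_. borel)) (\<lambda>w. \<lambda>i\<in>{1..n}. X i w))"
    by (intro prob_space_distr measurable_restrict)
  show "distr (distr M (PiM {1..n} (\<lambda>_. borel)) (\<lambda>w. \<lambda>i\<in>{1..n}. X i w)) (PiM {1..n} (\<lambda>_. borel))
      (sign_flip {1..n} \<mu> s) = distr M (PiM {1..n} (\<lambda>_. borel)) (\<lambda>w. \<lambda>i\<in>{1..n}. X i w)"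
    if "s \<in> sign_vectors {1..n}" for s
    using assms(5) by (intro distr_sign_flip_eq[OF indep _ ident symm that]) simp
qed (use assms(6-8) in simp_all)

theorem corollary1:
  fixes M :: "'w measure"
    and X :: "nat \<Rightarrow> 'w \<Rightarrow> real"
    and \<alpha> :: "nat \<Rightarrow> nat \<Rightarrow> 'w \<Rightarrow> real"
    and \<pi> :: "'w \<Rightarrow> nat \<Rightarrow> nat"
    and \<mu> :: real and n k m r :: nat
  assumes "prob_space M"
    and "1 \<le> k" and "k \<le> n" and "1 \<le> r" and "r \<le> m"
    \<comment> \<open>data: i.i.d., distribution symmetric about mu\<close>
    and "prob_space.indep_vars M (\<lambda>_. borel) X {1..n}"
    and "\<And>i. i \<in> {1..n} \<Longrightarrow> distr M borel (X i) = distr M borel (X 1)"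
    and "distr M borel (\<lambda>w. X 1 w - \<mu>) = distr M borel (\<lambda>w. \<mu> - X 1 w)"
    \<comment> \<open>i.i.d. Rademacher signs\<close>
    and "prob_space.indep_vars M (\<lambda>_. borel) (\<lambda>(i, j). \<alpha> i j) ({1..n} \<times> {1..<m})"
    and "\<And>i j. i \<in> {1..n} \<Longrightarrow> j \<in> {1..<m} \<Longrightarrow>
           measure M {w \<in> space M. \<alpha> i j w = 1} = 1 / 2 \<and>
           measure M {w \<in> space M. \<alpha> i j w = -1} = 1 / 2"
    \<comment> \<open>uniformly random permutation of {0,...,m-1}\<close>
    and "\<And>w. w \<in> space M \<Longrightarrow> \<pi> w permutes {..<m}"
    and "\<And>p. p permutes {..<m} \<Longrightarrow> measure M {w \<in> space M. \<pi> w = p} = 1 / fact m"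
    \<comment> \<open>data, signs and permutation mutually independent\<close>
    and "\<pi> \<in> measurable M (count_space UNIV)"
    and "\<And>A B C. A \<in> sets (PiM {1..n} (\<lambda>_. borel)) \<Longrightarrow>
           B \<in> sets (PiM ({1..n} \<times> {1..<m}) (\<lambda>_. borel)) \<Longrightarrow>
           measure M {w \<in> space M. (\<lambda>i\<in>{1..n}. X i w) \<in> A
               \<and> (\<lambda>ij\<in>{1..n} \<times> {1..<m}. \<alpha> (fst ij) (snd ij) w) \<in> B \<and> \<pi> w \<in> C}
           = measure M {w \<in> space M. (\<lambda>i\<in>{1..n}. X i w) \<in> A}
             * measure M {w \<in> space M. (\<lambda>ij\<in>{1..n} \<times> {1..<m}. \<alpha> (fst ij) (snd ij) w) \<in> B}
             * measure M {w \<in> space M. \<pi> w \<in> C}"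
  shows "measure M {w \<in> space M. \<mu> \<in> conf_set n k m r (\<lambda>i. X i w) (\<lambda>i j. \<alpha> i j w) (\<pi> w)}
           = 1 - real r / real m"
proof -
  interpret P: prob_space M
    by fact
  let ?IJ = "{1..n} \<times> {1..<m}"
  let ?A = "\<lambda>w. \<lambda>ij\<in>?IJ. \<alpha> (fst ij) (snd ij) w"
  have m: "1 \<le> m" and n: "1 \<le> n"
    using assms(2-5) by simp_all
  have X: "X i \<in> borel_measurable M" if "i \<in> {1..n}" for i
    using assms(6) that by (auto simp: P.indep_vars_def)
  have \<alpha>: "\<alpha> i j \<in> borel_measurable M" if "i \<in> {1..n}" "j \<in> {1..<m}" for i j
    using assms(9) that unfolding P.indep_vars_def by fastforce
  have signs: "AE w in M. ?A w \<in> sign_vectors ?IJ"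
    by (rule P.sign_matrix_law(1)[OF _ _ assms(9,10)]) simp_all
  have signs_law: "P.prob {w \<in> space M. ?A w = a} = (1/2) ^ (n * (m - 1))" if "a \<in> sign_vectors ?IJ" for a
    using P.sign_matrix_law(2)[OF _ _ assms(9,10) that] by simp
  have indep: "P.prob {w \<in> space M. (\<lambda>i\<in>{1..n}. X i w) \<in> B \<and> ?A w = a \<and> \<pi> w = p}
      = P.prob {w \<in> space M. (\<lambda>i\<in>{1..n}. X i w) \<in> B} * P.prob {w \<in> space M. ?A w = a}
        * P.prob {w \<in> space M. \<pi> w = p}" if "B \<in> sets (PiM {1..n} (\<lambda>_. borel))" "a \<in> sign_vectors ?IJ" for B a p
    using assms(14)[OF that(1) singleton_sets_PiM[OF _ sign_vectors_extensional[OF that(2)]], of "{p}"]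
    by simp
  let ?Q = "distr M (PiM {1..n} (\<lambda>_. borel)) (\<lambda>w. \<lambda>i\<in>{1..n}. X i w)"
  let ?R = "\<lambda>a p. {y \<in> space (PiM {1..n} (\<lambda>_. borel)). rank_R n k m y (\<lambda>i j. a (i, j)) p \<mu> \<le> m - r}"
  let ?S = "\<Sum>x \<in> sign_vectors ?IJ \<times> {p. p permutes {..<m}}. measure ?Q (?R (fst x) (snd x))"
  have "P.prob {w \<in> space M. rank_R n k m (\<lambda>i. X i w) (\<lambda>i j. \<alpha> i j w) (\<pi> w) \<mu> \<le> m - r}
      = ?S * (1/2) ^ (n * (m - 1)) * (1 / fact m)"
    using assms(2) X \<alpha> assms(13) assms(11) signs indep signs_law assms(12) by (rule P.prob_rank_R_le_eq_sum)
  also have "?S = real (m - r) / real m * 2 ^ (n * (m - 1)) * fact m"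
    using assms(6-8) n assms(2) diff_le_self m by (rule P.sum_measure_rank_R_le_symmetric_iid)
  also have "real (m - r) / real m * 2 ^ (n * (m - 1)) * fact m * (1/2) ^ (n * (m - 1)) * (1 / fact m)
      = 1 - real r / real m"
    using assms(5) m by (simp add: field_simps power_one_over of_nat_diff)
  finally show ?thesis
    by (simp add: conf_set_def)
qed

end
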